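(* Let $R$ be a tournament on $[n]$. Then there is a positive integer $M$ such that for every integer $N\ge M$ there exists a regular $n$ partition $\mathcal A=\{A_1,\dots,A_n\}$ of $[Nn]$ with $R[\mathcal A]=R$; that is, for $i,j\in[n]$, $A_i\to A_j$ if and only if $(i,j)\in R$.
   Context: A tournament on $[n]$ is $R\subset[n]\times[n]$ with no diagonal pairs and exactly one of $(i,j),(j,i)$ for each distinct $i,j$. A regular $n$ partition of $[Nn]=\{1,\dots,Nn\}$ is a partition $\{A_1,\dots,A_n\}$ into $n$ disjoint sets each of cardinality $N$. For such a partition, $R[\mathcal A]=\{(i,j)\in[n]\times[n]: |\{(a,b)\in A_i\times A_j:a>b\}|>N^2/2\}$, and $A_i\to A_j$ means $(i,j)\in R[\mathcal A]$. *)

theory Defs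
  imports Complex_Main
begin

definition tournament :: "nat \<Rightarrow> (nat \<times> nat) set \<Rightarrow> bool" where
  "tournament n R \<longleftrightarrow> R \<subseteq> {1..n} \<times> {1..n} \<and> (\<forall>i. (i, i) \<notin> R) \<and>
     (\<forall>i\<in>{1..n}. \<forall>j\<in>{1..n}. i \<noteq> j \<longrightarrow> ((i, j) \<in> R \<longleftrightarrow> (j, i) \<notin> R))"

definition regular_partition :: "nat \<Rightarrow> nat \<Rightarrow> (nat \<Rightarrow> nat set) \<Rightarrow> bool" where
  "regular_partition N n A \<longleftrightarrow>
     (\<forall>i\<in>{1..n}. card (A i) = N) \<and>
     (\<forall>i\<in>{1..n}. \<forall>j\<in>{1..n}. i \<noteq> j \<longrightarrow> A i \<inter> A j = {}) \<and>
     (\<Union>i\<in>{1..n}. A i) = {1..N * n}"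

definition induced_rel :: "nat \<Rightarrow> nat \<Rightarrow> (nat \<Rightarrow> nat set) \<Rightarrow> (nat \<times> nat) set" where
  "induced_rel N n A = {(i, j). i \<in> {1..n} \<and> j \<in> {1..n} \<and>
      real (card {(a, b). a \<in> A i \<and> b \<in> A j \<and> a > b}) > real N ^ 2 / 2}"

end

theory Submission
  imports Defs
begin

text \<open>
  Cut [Nn] into N consecutive blocks of length n, let the k-th block list 1, ..., n in the
  order of a linear order on [n], and let A_i consist of the positions of i in all blocks.
  Pairs (a, b) in A_i x A_j from two distinct blocks satisfy a > b in exactly N(N-1)/2 cases,
  so A_i -> A_j holds iff a strict majority of the N orders rank i above j.  By McGarvey's
  construction every tournament is such a majority relation: each edge (a, b) contributes two
  orders that put a directly above b and are mutually reverse on every other pair, and the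
  remaining orders alternate between the identity and its reverse, which changes the margin
  of any pair by at most one.
\<close>

definition rank :: "nat \<Rightarrow> (nat \<Rightarrow> int) \<Rightarrow> nat \<Rightarrow> nat" where
  "rank n \<kappa> x = card {y\<in>{1..n}. \<kappa> y < \<kappa> x}"

lemma rank_less_iff:
  assumes "inj_on \<kappa> {1..n}" "x \<in> {1..n}" "y \<in> {1..n}"
  shows "rank n \<kappa> x < rank n \<kappa> y \<longleftrightarrow> \<kappa> x < \<kappa> y"
proof
  assume "\<kappa> x < \<kappa> y"
  then have "{z\<in>{1..n}. \<kappa> z < \<kappa> x} \<subset> {z\<in>{1..n}. \<kappa> z < \<kappa> y}"
    using assms by auto
  then show "rank n \<kappa> x < rank n \<kappa> y" unfolding rank_def by (intro psubset_card_mono) auto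
next
  assume less: "rank n \<kappa> x < rank n \<kappa> y"
  show "\<kappa> x < \<kappa> y"
  proof (rule ccontr)
    assume "\<not> \<kappa> x < \<kappa> y"
    then have "rank n \<kappa> y \<le> rank n \<kappa> x" unfolding rank_def by (intro card_mono) auto
    with less show False by simp
  qed
qed

lemma rank_less:
  assumes "x \<in> {1..n}"
  shows "rank n \<kappa> x < n"
proof -
  have "x \<notin> {y\<in>{1..n}. \<kappa> y < \<kappa> x}" by simp
  then have "{y\<in>{1..n}. \<kappa> y < \<kappa> x} \<subset> {1..n}" using assms by blast
  then have "rank n \<kappa> x < card {1..n}" unfolding rank_def using psubset_card_mono by blast
  then show ?thesis by simp
qed

lemma bij_betw_rank:
  assumes inj: "inj_on \<kappa> {1..n}"
  shows "bij_betw (rank n \<kappa>) {1..n} {0..<n}"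
proof -
  have inj_rank: "inj_on (rank n \<kappa>) {1..n}"
  proof (rule inj_onI)
    fix x y assume xy: "x \<in> {1..n}" "y \<in> {1..n}" "rank n \<kappa> x = rank n \<kappa> y"
    have "\<kappa> x = \<kappa> y"
      using rank_less_iff[OF inj xy(1,2)] rank_less_iff[OF inj xy(2,1)] xy(3)
      by (cases "\<kappa> x" "\<kappa> y" rule: linorder_cases) auto
    then show "x = y" using inj_onD[OF inj _ xy(1,2)] by blast
  qed
  have "rank n \<kappa> ` {1..n} \<subseteq> {0..<n}" using rank_less by auto
  moreover have "card (rank n \<kappa> ` {1..n}) = card {0..<n}"
    using card_image[OF inj_rank] by simp
  ultimately have "rank n \<kappa> ` {1..n} = {0..<n}" by (simp add: card_subset_eq)
  with inj_rank show ?thesis unfolding bij_betw_def by simp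
qed

lemma mult_add_eq_mult_add_iff:
  fixes n k l p q :: nat
  assumes "p < n" "q < n"
  shows "k * n + p = l * n + q \<longleftrightarrow> k = l \<and> p = q"
proof
  assume eq: "k * n + p = l * n + q"
  have "k = (k * n + p) div n" using assms(1) by simp
  also have "\<dots> = l" using assms(2) by (simp add: eq)
  finally show "k = l \<and> p = q" using eq by simp
qed simp

lemma mult_add_less_mult_add_iff:
  fixes n k l p q :: nat
  assumes "p < n" "q < n"
  shows "l * n + q < k * n + p \<longleftrightarrow> l < k \<or> (l = k \<and> q < p)"
proof -
  have "a * n + r < b * n" if "a < b" "r < n" for a b r :: nat
  proof -
    have "(a + 1) * n \<le> b * n" using that by (intro mult_le_mono) auto
    then show ?thesis using that by simp
  qed
  from this[of l k q] this[of k l p] assms show ?thesis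
    by (cases l k rule: linorder_cases) auto
qed

lemma card_lex_below:
  "2 * card {(k, l). k < N \<and> l < N \<and> (l < k \<or> (l = k \<and> P k))} + N
     = N * N + 2 * card {k. k < N \<and> P k}"
proof -
  let ?L = "Sigma {..<N} (\<lambda>k. {..<k})" and ?D = "(\<lambda>k. (k, k)) ` {k. k < N \<and> P k}"
  have "{(k, l). k < N \<and> l < N \<and> (l < k \<or> (l = k \<and> P k))} = ?L \<union> ?D"
    by auto
  moreover have "card ?L = (\<Sum>k<N. k)" by simp
  moreover have "card ?D = card {k. k < N \<and> P k}" by (simp add: card_image inj_on_def)
  moreover have "card (?L \<union> ?D) = card ?L + card ?D" by (rule card_Un_disjoint) auto
  moreover have "2 * (\<Sum>k<N. k) + N = N * N" by (induction N) auto
  ultimately show ?thesis by simp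
qed

text \<open>
  Linear orders on [n] are given by injective integer keys: block k lists i before j iff
  K k i < K k j.
\<close>

definition block_pos :: "nat \<Rightarrow> (nat \<Rightarrow> nat \<Rightarrow> int) \<Rightarrow> nat \<Rightarrow> nat \<Rightarrow> nat" where
  "block_pos n K i k = k * n + rank n (K k) i + 1"

definition block_partition :: "nat \<Rightarrow> nat \<Rightarrow> (nat \<Rightarrow> nat \<Rightarrow> int) \<Rightarrow> nat \<Rightarrow> nat set" where
  "block_partition N n K i = block_pos n K i ` {..<N}"

definition majority_rel :: "nat \<Rightarrow> nat \<Rightarrow> (nat \<Rightarrow> nat \<Rightarrow> int) \<Rightarrow> (nat \<times> nat) set" where
  "majority_rel n N K = {(i, j). i \<in> {1..n} \<and> j \<in> {1..n} \<and> N < 2 * card {k. k < N \<and> K k j < K k i}}"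

lemma majority_rel_subset: "majority_rel n N K \<subseteq> {1..n} \<times> {1..n}"
  unfolding majority_rel_def by blast

lemma block_pos_eq_iff:
  assumes "i \<in> {1..n}" "j \<in> {1..n}"
  shows "block_pos n K i k = block_pos n K j l \<longleftrightarrow> k = l \<and> rank n (K k) i = rank n (K l) j"
  using mult_add_eq_mult_add_iff[OF rank_less[OF assms(1)] rank_less[OF assms(2)]]
  unfolding block_pos_def by simp

lemma block_pos_less_iff:
  assumes inj: "\<And>k. inj_on (K k) {1..n}" and "i \<in> {1..n}" "j \<in> {1..n}"
  shows "block_pos n K j l < block_pos n K i k \<longleftrightarrow> l < k \<or> (l = k \<and> K k j < K k i)"
  using mult_add_less_mult_add_iff[where p = "rank n (K k) i" and q = "rank n (K l) j"]
    rank_less rank_less_iff[OF inj assms(3,2)] assms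
  unfolding block_pos_def by auto

lemma regular_partition_block_partition:
  assumes inj: "\<And>k. inj_on (K k) {1..n}"
  shows "regular_partition N n (block_partition N n K)"
  unfolding regular_partition_def
proof (intro conjI ballI impI)
  fix i assume i: "i \<in> {1..n}"
  have "inj_on (block_pos n K i) {..<N}"
    using block_pos_eq_iff[where K = K, OF i i] by (auto intro: inj_onI)
  then show "card (block_partition N n K i) = N" unfolding block_partition_def by (simp add: card_image)
next
  fix i j assume ij: "i \<in> {1..n}" "j \<in> {1..n}" "i \<noteq> j"
  have "rank n (K k) i \<noteq> rank n (K k) j" for k
    using inj_onD[OF bij_betw_imp_inj_on[OF bij_betw_rank[OF inj]] _ ij(1,2)] ij(3) by blast
  then show "block_partition N n K i \<inter> block_partition N n K j = {}"
    unfolding block_partition_def using block_pos_eq_iff[where K = K, OF ij(1,2)] by auto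
next
  show "(\<Union>i\<in>{1..n}. block_partition N n K i) = {1..N * n}"
  proof (intro equalityI subsetI)
    fix a assume "a \<in> (\<Union>i\<in>{1..n}. block_partition N n K i)"
    then obtain i k where i: "i \<in> {1..n}" and k: "k < N" and a: "a = k * n + rank n (K k) i + 1"
      unfolding block_partition_def block_pos_def by auto
    have "(k + 1) * n \<le> N * n" using k by (intro mult_le_mono) auto
    then show "a \<in> {1..N * n}" using a rank_less[OF i, of "K k"] by auto
  next
    fix a assume a: "a \<in> {1..N * n}"
    define k where "k = (a - 1) div n"
    have "k < N" unfolding k_def using a less_mult_imp_div_less[of "a - 1" N n] by auto
    have "(a - 1) mod n \<in> rank n (K k) ` {1..n}"
      using bij_betw_rank[OF inj, of k] a unfolding bij_betw_def by (cases "n = 0") auto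
    then obtain i where i: "i \<in> {1..n}" "(a - 1) mod n = rank n (K k) i" by (rule imageE)
    have "a = block_pos n K i k"
      using a i(2) div_mult_mod_eq[of "a - 1" n] unfolding block_pos_def k_def by simp
    then show "a \<in> (\<Union>i\<in>{1..n}. block_partition N n K i)"
      using i \<open>k < N\<close> unfolding block_partition_def by blast
  qed
qed

lemma card_inversions_block_partition:
  assumes inj: "\<And>k. inj_on (K k) {1..n}" and i: "i \<in> {1..n}" and j: "j \<in> {1..n}"
  shows "2 * card {(a, b). a \<in> block_partition N n K i \<and> b \<in> block_partition N n K j \<and> a > b} + N
         = N * N + 2 * card {k. k < N \<and> K k j < K k i}"
proof -
  let ?f = "\<lambda>(k, l). (block_pos n K i k, block_pos n K j l)"
  let ?S = "{(k, l). k < N \<and> l < N \<and> (l < k \<or> (l = k \<and> K k j < K k i))}"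
  have "{(a, b). a \<in> block_partition N n K i \<and> b \<in> block_partition N n K j \<and> a > b} = ?f ` ?S"
    unfolding block_partition_def using block_pos_less_iff[where K = K, OF inj i j] by fast
  moreover have "inj ?f"
    using block_pos_eq_iff[where K = K, OF i i] block_pos_eq_iff[where K = K, OF j j] by (auto intro: injI)
  ultimately show ?thesis
    using card_lex_below[of N "\<lambda>k. K k j < K k i"] by (simp add: card_image inj_on_subset)
qed

lemma induced_rel_block_partition:
  assumes inj: "\<And>k. inj_on (K k) {1..n}"
  shows "induced_rel N n (block_partition N n K) = majority_rel n N K"
proof -
  have real_iff: "real c > real N ^ 2 / 2 \<longleftrightarrow> N * N < 2 * c" for c :: nat
  proof -
    have "real c > real N ^ 2 / 2 \<longleftrightarrow> real (N * N) < real (2 * c)"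
      by (simp add: power2_eq_square field_simps)
    then show ?thesis by (simp only: of_nat_less_iff)
  qed
  have "(i, j) \<in> induced_rel N n (block_partition N n K) \<longleftrightarrow> (i, j) \<in> majority_rel n N K"
    if "i \<in> {1..n}" "j \<in> {1..n}" for i j
  proof -
    let ?c = "card {(a, b). a \<in> block_partition N n K i \<and> b \<in> block_partition N n K j \<and> a > b}"
    have "(i, j) \<in> induced_rel N n (block_partition N n K) \<longleftrightarrow> N * N < 2 * ?c"
      using that real_iff unfolding induced_rel_def by simp
    also have "\<dots> \<longleftrightarrow> N < 2 * card {k. k < N \<and> K k j < K k i}"
      using card_inversions_block_partition[where K = K and N = N, OF inj that] by linarith
    finally show ?thesis using that unfolding majority_rel_def by simp
  qed
  then show ?thesis unfolding induced_rel_def majority_rel_def by auto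
qed

definition vote :: "bool \<Rightarrow> int" where
  "vote b = (if b then 1 else -1)"

lemma sum_vote: "(\<Sum>k<N. vote (P k)) = 2 * int (card {k. k < N \<and> P k}) - int N"
proof -
  have "(\<Sum>k<N. vote (P k)) = (\<Sum>k<N. 2 * of_bool (P k) - 1)"
    by (rule sum.cong) (auto simp: vote_def)
  also have "\<dots> = 2 * (\<Sum>k<N. of_bool (P k)) - int N"
    by (simp add: sum_subtractf sum_distrib_left)
  also have "(\<Sum>k<N. of_bool (P k)) = int (card {k. k < N \<and> P k})"
  proof -
    have "{..<N} \<inter> {k. P k} = {k. k < N \<and> P k}" by auto
    then show ?thesis by simp
  qed
  finally show ?thesis .
qed

lemma sum_alternating_vote:
  "(\<Sum>t<L::nat. if even t then s else - s) = (if even L then 0 else s :: int)"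
  by (induction L) auto

text \<open>
  Both keys of an edge r = (a, b) put b directly below a, at the bottom resp. at the
  top; on the remaining vertices the two orders are reverse to each other.
\<close>

definition edge_key_bottom :: "nat \<times> nat \<Rightarrow> nat \<Rightarrow> int" where
  "edge_key_bottom r x = (if x = snd r then 0 else if x = fst r then 1 else int x + 2)"

definition edge_key_top :: "nat \<times> nat \<Rightarrow> nat \<Rightarrow> int" where
  "edge_key_top r x = (if x = snd r then 1 else if x = fst r then 2 else - int x)"

definition edge_margin :: "nat \<Rightarrow> nat \<Rightarrow> nat \<times> nat \<Rightarrow> int" where
  "edge_margin i j r =
     vote (edge_key_bottom r j < edge_key_bottom r i) + vote (edge_key_top r j < edge_key_top r i)"

definition mcgarvey_keys :: "(nat \<Rightarrow> nat \<times> nat) \<Rightarrow> nat \<Rightarrow> nat \<Rightarrow> nat \<Rightarrow> int" where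
  "mcgarvey_keys e m k x =
     (if k < m then edge_key_bottom (e k) x
      else if k < 2 * m then edge_key_top (e (k - m)) x
      else if even (k - 2 * m) then int x else - int x)"

lemma inj_edge_key_bottom: "inj (edge_key_bottom r)"
  unfolding edge_key_bottom_def by (auto simp: inj_def split: if_splits)

lemma inj_edge_key_top: "inj (edge_key_top r)"
  unfolding edge_key_top_def by (auto simp: inj_def split: if_splits)

lemma inj_mcgarvey_keys: "inj_on (mcgarvey_keys e m k) A"
proof -
  consider "k < m" | "\<not> k < m" "k < 2 * m" | "\<not> k < 2 * m" "even (k - 2 * m)"
    | "\<not> k < 2 * m" "odd (k - 2 * m)" by blast
  then have "mcgarvey_keys e m k \<in> {edge_key_bottom (e k), edge_key_top (e (k - m)), int, \<lambda>x. - int x}"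
    by cases (simp_all add: mcgarvey_keys_def fun_eq_iff)
  moreover have "inj (\<lambda>x. - int x)" by (simp add: inj_def)
  ultimately show ?thesis
    using inj_edge_key_bottom[of "e k"] inj_edge_key_top[of "e (k - m)"] inj_of_nat
    by (auto intro: inj_on_subset)
qed

lemma edge_margin_eq:
  assumes "i \<noteq> j" "fst r \<noteq> snd r"
  shows "edge_margin i j r = (if r = (i, j) then 2 else if r = (j, i) then -2 else 0)"
  using assms unfolding edge_margin_def vote_def edge_key_bottom_def edge_key_top_def
  by (cases r) auto

lemma sum_edge_margin:
  assumes "finite R" "\<forall>r\<in>R. fst r \<noteq> snd r" "i \<noteq> j"
  shows "(\<Sum>r\<in>R. edge_margin i j r) = 2 * of_bool ((i, j) \<in> R) - 2 * of_bool ((j, i) \<in> R)"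
proof -
  have "(\<Sum>r\<in>R. edge_margin i j r)
      = (\<Sum>r\<in>R. (if r = (i, j) then 2 else 0) - (if r = (j, i) then 2 else 0))"
    using assms edge_margin_eq by (intro sum.cong) auto
  also have "\<dots> = 2 * of_bool ((i, j) \<in> R) - 2 * of_bool ((j, i) \<in> R)"
    using assms(1,3) by (simp add: sum_subtractf)
  finally show ?thesis .
qed

lemma sum_vote_mcgarvey_keys:
  assumes e: "bij_betw e {0..<m} R" and N: "2 * m \<le> N" and "i \<noteq> j"
  shows "(\<Sum>k<N. vote (mcgarvey_keys e m k j < mcgarvey_keys e m k i)) =
     (\<Sum>r\<in>R. edge_margin i j r) + (if even (N - 2 * m) then 0 else vote (j < i))"
proof -
  let ?v = "\<lambda>k. vote (mcgarvey_keys e m k j < mcgarvey_keys e m k i)"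
  have "(\<Sum>k<N. ?v k) = sum ?v {0..<m} + sum ?v {m..<2 * m} + sum ?v {2 * m..<N}"
    using N by (simp add: lessThan_atLeast0 sum.atLeastLessThan_concat)
  also have "sum ?v {m..<2 * m} = (\<Sum>k<m. ?v (k + m))"
    using sum.shift_bounds_nat_ivl[of ?v 0 m m] by (simp add: lessThan_atLeast0 mult_2)
  also have "sum ?v {2 * m..<N} = (\<Sum>k<N - 2 * m. ?v (k + 2 * m))"
    using sum.shift_bounds_nat_ivl[of ?v 0 "2 * m" "N - 2 * m"] N by (simp add: lessThan_atLeast0)
  also have "sum ?v {0..<m} = (\<Sum>k<m. ?v k)" by (simp add: lessThan_atLeast0)
  also have "(\<Sum>k<m. ?v k) + (\<Sum>k<m. ?v (k + m)) = (\<Sum>k<m. edge_margin i j (e k))"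
    by (simp add: edge_margin_def mcgarvey_keys_def sum.distrib)
  also have "\<dots> = (\<Sum>r\<in>R. edge_margin i j r)"
    using sum.reindex_bij_betw[OF e] by (simp add: lessThan_atLeast0)
  also have "(\<Sum>k<N - 2 * m. ?v (k + 2 * m)) = (\<Sum>t<N - 2 * m. if even t then vote (j < i) else - vote (j < i))"
    using \<open>i \<noteq> j\<close> by (intro sum.cong) (auto simp: mcgarvey_keys_def vote_def)
  finally show ?thesis by (simp add: sum_alternating_vote)
qed

theorem majority_rel_mcgarvey_keys:
  assumes R: "tournament n R" and e: "bij_betw e {0..<m} R" and N: "2 * m < N"
  shows "majority_rel n N (mcgarvey_keys e m) = R"
proof -
  have irrefl: "\<forall>r\<in>R. fst r \<noteq> snd r" and sub: "R \<subseteq> {1..n} \<times> {1..n}"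
    using R unfolding tournament_def by auto
  have fin: "finite R" using sub finite_subset by blast
  have "(i, j) \<in> majority_rel n N (mcgarvey_keys e m) \<longleftrightarrow> (i, j) \<in> R"
    if ij: "i \<in> {1..n}" "j \<in> {1..n}" for i j
  proof (cases "i = j")
    case True
    then show ?thesis using irrefl unfolding majority_rel_def by auto
  next
    case False
    let ?S = "\<Sum>k<N. vote (mcgarvey_keys e m k j < mcgarvey_keys e m k i)"
    and ?filler = "if even (N - 2 * m) then 0 else vote (j < i)"
    have "(i, j) \<in> majority_rel n N (mcgarvey_keys e m) \<longleftrightarrow> 0 < ?S"
      using ij sum_vote[where N = N and P = "\<lambda>k. mcgarvey_keys e m k j < mcgarvey_keys e m k i"]
      unfolding majority_rel_def by (simp del: of_nat_less_iff) linarith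
    moreover obtain f where "?S = 2 * of_bool ((i, j) \<in> R) - 2 * of_bool ((j, i) \<in> R) + f"
      and "-1 \<le> f" "f \<le> 1"
    proof
      show "?S = 2 * of_bool ((i, j) \<in> R) - 2 * of_bool ((j, i) \<in> R) + ?filler"
        using sum_vote_mcgarvey_keys[OF e _ False] sum_edge_margin[OF fin irrefl False] N by simp
    qed (auto simp: vote_def)
    moreover have "(i, j) \<in> R \<longleftrightarrow> (j, i) \<notin> R" using R ij False unfolding tournament_def by blast
    ultimately show ?thesis by (cases "(i, j) \<in> R") simp_all
  qed
  with majority_rel_subset sub show ?thesis by blast
qed

theorem theorem6p1:
  fixes n :: nat and R :: "(nat \<times> nat) set"
  assumes "tournament n R"
  shows "\<exists>M::nat. M > 0 \<and> (\<forall>N\<ge>M. \<exists>A. regular_partition N n A \<and> induced_rel N n A = R)"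
proof -
  have "R \<subseteq> {1..n} \<times> {1..n}" using assms unfolding tournament_def by blast
  then have "finite R" by (rule finite_subset) simp
  then obtain e where e: "bij_betw e {0..<card R} R" using ex_bij_betw_nat_finite by blast
  let ?A = "\<lambda>N. block_partition N n (mcgarvey_keys e (card R))"
  have "regular_partition N n (?A N) \<and> induced_rel N n (?A N) = R" if "2 * card R < N" for N
  proof
    show "regular_partition N n (?A N)"
      by (rule regular_partition_block_partition[OF inj_mcgarvey_keys])
    show "induced_rel N n (?A N) = R"
      using induced_rel_block_partition[OF inj_mcgarvey_keys] majority_rel_mcgarvey_keys[OF assms e that]
      by simp
  qed
  then have "\<forall>N\<ge>2 * card R + 1. \<exists>A. regular_partition N n A \<and> induced_rel N n A = R"
    by (metis Suc_eq_plus1 Suc_le_eq)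
  then show ?thesis by (intro exI[of _ "2 * card R + 1"]) simp
qed

end
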